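(* Let $R=R_1\times\cdots\times R_n$ be a direct product of commutative rings with nonzero identity and let $I=I_1\times\cdots\times I_n$ be an ideal of $R$, with $I_i$ an ideal of $R_i$. If $x_i$ is adjacent to $y_i$ in $\Gamma''_{I_i}(R_i)$ for some $1\leq i\leq n$, then every element of $R$ with $i$-th component $x_i$ is adjacent in $\Gamma''_I(R)$ to every element of $R$ with $i$-th component $y_i$.
   Context: The product has componentwise operations. For a commutative ring $S$ and an ideal $J$ of $S$, $\Gamma''_J(S)$ is the simple undirected graph whose vertex set is $\{x\in S\setminus J : xS+J\neq S\}$, with distinct vertices $x,y$ adjacent if and only if $x\notin yS+J$ and $y\notin xS+J$. *)

theory Defs
  imports "HOL-Algebra.Ring" "HOL-Algebra.Ideal"
begin

definition princ_plus :: "('a, 'b) ring_scheme \<Rightarrow> 'a \<Rightarrow> 'a set \<Rightarrow> 'a set" where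
  "princ_plus S x J = {x \<otimes>\<^bsub>S\<^esub> s \<oplus>\<^bsub>S\<^esub> j | s j. s \<in> carrier S \<and> j \<in> J}"

definition gvert :: "('a, 'b) ring_scheme \<Rightarrow> 'a set \<Rightarrow> 'a set" where
  "gvert S J = {x \<in> carrier S - J. princ_plus S x J \<noteq> carrier S}"

definition gadj :: "('a, 'b) ring_scheme \<Rightarrow> 'a set \<Rightarrow> 'a \<Rightarrow> 'a \<Rightarrow> bool" where
  "gadj S J x y \<longleftrightarrow> x \<in> gvert S J \<and> y \<in> gvert S J \<and> x \<noteq> y \<and>
     x \<notin> princ_plus S y J \<and> y \<notin> princ_plus S x J"

text \<open>Direct product R_0 x ... x R_(n-1) with componentwise operations;
  elements are extensional functions on {..<n}.\<close>
definition prod_ring :: "(nat \<Rightarrow> 'a ring) \<Rightarrow> nat \<Rightarrow> (nat \<Rightarrow> 'a) ring" where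
  "prod_ring R n =
     \<lparr> carrier = (\<Pi>\<^sub>E i\<in>{..<n}. carrier (R i)),
       monoid.mult = (\<lambda>f g. \<lambda>i\<in>{..<n}. f i \<otimes>\<^bsub>R i\<^esub> g i),
       one = (\<lambda>i\<in>{..<n}. \<one>\<^bsub>R i\<^esub>),
       zero = (\<lambda>i\<in>{..<n}. \<zero>\<^bsub>R i\<^esub>),
       add = (\<lambda>f g. \<lambda>i\<in>{..<n}. f i \<oplus>\<^bsub>R i\<^esub> g i) \<rparr>"

end

theory Submission
  imports Defs
begin

text \<open>Projection to the \<open>i\<close>-th factor maps \<open>x R + I\<close> into \<open>x\<^sub>i R\<^sub>i + I\<^sub>i\<close>. Hence a
  witness \<open>c \<notin> x\<^sub>i R\<^sub>i + I\<^sub>i\<close> in the \<open>i\<close>-th coordinate shows \<open>x R + I \<noteq> R\<close>, and non-membership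
  \<open>y\<^sub>i \<notin> x\<^sub>i R\<^sub>i + I\<^sub>i\<close> lifts to \<open>y \<notin> x R + I\<close>.\<close>

lemma princ_plus_prod_ring_component:
  assumes "z \<in> princ_plus (prod_ring R n) x (\<Pi>\<^sub>E k\<in>{..<n}. I k)" and "i < n"
  shows "z i \<in> princ_plus (R i) (x i) (I i)"
proof -
  obtain s j where z: "z = x \<otimes>\<^bsub>prod_ring R n\<^esub> s \<oplus>\<^bsub>prod_ring R n\<^esub> j"
    and s: "s \<in> carrier (prod_ring R n)" and j: "j \<in> (\<Pi>\<^sub>E k\<in>{..<n}. I k)"
    using assms(1) unfolding princ_plus_def by blast
  have "z i = x i \<otimes>\<^bsub>R i\<^esub> s i \<oplus>\<^bsub>R i\<^esub> j i"
    using z \<open>i < n\<close> by (simp add: prod_ring_def)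
  moreover have "s i \<in> carrier (R i)" "j i \<in> I i"
    using s j \<open>i < n\<close> by (auto simp: prod_ring_def)
  ultimately show ?thesis
    unfolding princ_plus_def by blast
qed

lemma princ_plus_subset_carrier:
  assumes "ring S" and "J \<subseteq> carrier S" and "x \<in> carrier S"
  shows "princ_plus S x J \<subseteq> carrier S"
  using assms unfolding princ_plus_def by (auto intro: ring.ring_simprules(1,5))

lemma gvert_prod_ring:
  assumes "i < n" and "ring (R i)" and "I i \<subseteq> carrier (R i)"
    and x: "x \<in> carrier (prod_ring R n)" and xi: "x i \<in> gvert (R i) (I i)"
  shows "x \<in> gvert (prod_ring R n) (\<Pi>\<^sub>E k\<in>{..<n}. I k)"
proof -
  have "princ_plus (R i) (x i) (I i) \<subset> carrier (R i)"
    using xi princ_plus_subset_carrier[OF \<open>ring (R i)\<close> \<open>I i \<subseteq> carrier (R i)\<close>]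
    unfolding gvert_def by blast
  then obtain c where c: "c \<in> carrier (R i)" "c \<notin> princ_plus (R i) (x i) (I i)"
    by blast
  have "x(i := c) \<in> carrier (prod_ring R n)"
    using x c \<open>i < n\<close> by (auto simp: prod_ring_def PiE_def Pi_def extensional_def)
  moreover have "x(i := c) \<notin> princ_plus (prod_ring R n) x (\<Pi>\<^sub>E k\<in>{..<n}. I k)"
    using princ_plus_prod_ring_component[of "x(i := c)"] c \<open>i < n\<close> by force
  moreover have "x \<notin> (\<Pi>\<^sub>E k\<in>{..<n}. I k)"
    using xi \<open>i < n\<close> unfolding gvert_def by auto
  ultimately show ?thesis
    using x unfolding gvert_def by blast
qed

lemma gadj_prod_ring:
  assumes "i < n" and "ring (R i)" and "I i \<subseteq> carrier (R i)"
    and "x \<in> carrier (prod_ring R n)" and "y \<in> carrier (prod_ring R n)"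
    and adj: "gadj (R i) (I i) (x i) (y i)"
  shows "gadj (prod_ring R n) (\<Pi>\<^sub>E k\<in>{..<n}. I k) x y"
proof -
  have "x \<in> gvert (prod_ring R n) (\<Pi>\<^sub>E k\<in>{..<n}. I k)"
    and "y \<in> gvert (prod_ring R n) (\<Pi>\<^sub>E k\<in>{..<n}. I k)"
    using assms adj gvert_prod_ring unfolding gadj_def by blast+
  moreover have "x \<noteq> y"
    using adj unfolding gadj_def by blast
  moreover have "x \<notin> princ_plus (prod_ring R n) y (\<Pi>\<^sub>E k\<in>{..<n}. I k)"
    and "y \<notin> princ_plus (prod_ring R n) x (\<Pi>\<^sub>E k\<in>{..<n}. I k)"
    using adj princ_plus_prod_ring_component \<open>i < n\<close> unfolding gadj_def by blast+
  ultimately show ?thesis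
    unfolding gadj_def by blast
qed

theorem lemma2p1:
  fixes R :: "nat \<Rightarrow> 'a ring" and I :: "nat \<Rightarrow> 'a set" and n i :: nat
    and xi yi :: 'a and x y :: "nat \<Rightarrow> 'a"
  assumes "\<forall>k<n. cring (R k)"
    and "\<forall>k<n. \<one>\<^bsub>R k\<^esub> \<noteq> \<zero>\<^bsub>R k\<^esub>"
    and "\<forall>k<n. ideal (I k) (R k)"
    and "i < n"
    and "gadj (R i) (I i) xi yi"
    and "x \<in> carrier (prod_ring R n)" and "y \<in> carrier (prod_ring R n)"
    and "x i = xi" and "y i = yi"
  shows "gadj (prod_ring R n) (\<Pi>\<^sub>E k\<in>{..<n}. I k) x y"
proof (rule gadj_prod_ring)
  show "ring (R i)"
    using assms(1,4) cring.axioms(1) by blast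
  show "I i \<subseteq> carrier (R i)"
    using assms(3,4) ideal.axioms(1) additive_subgroup.a_subset by blast
qed (use assms(4-9) in simp_all)

end
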